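(* Let $I$ be an ideal of a ring $R$ with $Nil(R)\subseteq I$. The following are equivalent: (1) idempotents can be lifted uniquely weakly modulo $I$; (2) idempotents can be lifted weakly modulo $I$, $R$ is abelian, and $I$ is idempotent free; (3) idempotents can be lifted centrally weakly modulo $I$, and $I$ is idempotent free.
   Context: All rings are associative with identity; $Idem(R)$ is the set of idempotents and $Nil(R)$ the set of nilpotent elements of $R$. Idempotents can be lifted weakly modulo $I$ if for every $x\in R$ with $x^2-x\in I$ there is $e\in Idem(R)$ with $x-e\in I$ or $x+e\in I$; lifted uniquely weakly modulo $I$ if for every such $x$ there is a unique $e\in Idem(R)$ with $x-e\in I$ or $x+e\in I$; lifted centrally weakly modulo $I$ if for every such $x$ there is a central $e\in Idem(R)$ with $x-e\in I$ or $x+e\in I$. An ideal is idempotent free if the only idempotent it contains is $0$. $R$ is abelian if all its idempotents are central. *)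

theory Defs
  imports Main
begin

definition idem :: "'a::ring_1 \<Rightarrow> bool" where
  "idem e \<longleftrightarrow> e * e = e"

definition Idem :: "'a::ring_1 set" where
  "Idem = {e. idem e}"

definition Nil_set :: "'a::ring_1 set" where
  "Nil_set = {x. \<exists>n. x ^ n = 0}"

definition central :: "'a::ring_1 \<Rightarrow> bool" where
  "central e \<longleftrightarrow> (\<forall>y. e * y = y * e)"

definition is_ideal :: "'a::ring_1 set \<Rightarrow> bool" where
  "is_ideal I \<longleftrightarrow> 0 \<in> I \<and> (\<forall>x\<in>I. \<forall>y\<in>I. x + y \<in> I) \<and> (\<forall>x\<in>I. - x \<in> I)
     \<and> (\<forall>x\<in>I. \<forall>r. r * x \<in> I \<and> x * r \<in> I)"

definition lift_weakly :: "'a::ring_1 set \<Rightarrow> bool" where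
  "lift_weakly I \<longleftrightarrow> (\<forall>x. x\<^sup>2 - x \<in> I \<longrightarrow> (\<exists>e\<in>Idem. x - e \<in> I \<or> x + e \<in> I))"

definition lift_uniquely_weakly :: "'a::ring_1 set \<Rightarrow> bool" where
  "lift_uniquely_weakly I \<longleftrightarrow>
     (\<forall>x. x\<^sup>2 - x \<in> I \<longrightarrow> (\<exists>!e. e \<in> Idem \<and> (x - e \<in> I \<or> x + e \<in> I)))"

definition lift_centrally_weakly :: "'a::ring_1 set \<Rightarrow> bool" where
  "lift_centrally_weakly I \<longleftrightarrow>
     (\<forall>x. x\<^sup>2 - x \<in> I \<longrightarrow> (\<exists>e\<in>Idem. central e \<and> (x - e \<in> I \<or> x + e \<in> I)))"

definition idempotent_free :: "'a::ring_1 set \<Rightarrow> bool" where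
  "idempotent_free I \<longleftrightarrow> (\<forall>e\<in>I. idem e \<longrightarrow> e = 0)"

definition abelian_ring :: "'a::ring_1 itself \<Rightarrow> bool" where
  "abelian_ring _ \<longleftrightarrow> (\<forall>e::'a. idem e \<longrightarrow> central e)"

end

theory Submission
  imports Defs
begin

text \<open>Two weak lifts e, g of the same element satisfy e - g \<in> I or e + g \<in> I. If g is
  central, then e(1 - g) = (e \<plusminus> g)(1 - g) and g(1 - e) are idempotents lying in I, so
  idempotent freeness gives e = eg = ge = g. Conversely, uniqueness of lifts forces idempotent
  freeness (an idempotent of I and 0 both lift 0), and it forces every idempotent e to be
  central: for any r the element n = er(1 - e) squares to zero, hence lies in I, and e + n is an
  idempotent lifting e, so n = 0; likewise (1 - e)re = 0.\<close>

lemma is_idealD: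
  assumes "is_ideal I"
  shows ideal_zero: "0 \<in> I"
    and ideal_add: "x \<in> I \<Longrightarrow> y \<in> I \<Longrightarrow> x + y \<in> I"
    and ideal_uminus: "x \<in> I \<Longrightarrow> - x \<in> I"
    and ideal_mult_right: "x \<in> I \<Longrightarrow> x * r \<in> I"
  using assms by (simp_all add: is_ideal_def)

lemma ideal_diff: "is_ideal I \<Longrightarrow> x \<in> I \<Longrightarrow> y \<in> I \<Longrightarrow> x - y \<in> I"
  using ideal_add ideal_uminus by (metis diff_conv_add_uminus)

lemma Idem_iff: "e \<in> Idem \<longleftrightarrow> idem e"
  by (simp add: Idem_def)

lemma square_zero_in_Nil_set: "(n::'a::ring_1) * n = 0 \<Longrightarrow> n \<in> Nil_set"
  unfolding Nil_set_def by (auto intro: exI[of _ 2] simp: power2_eq_square)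

lemma idem_add_square_zero:
  fixes e n :: "'a::ring_1"
  assumes "idem e" "n * n = 0" "e * n + n * e = n"
  shows "idem (e + n)"
  using assms by (simp add: idem_def algebra_simps)

lemma idem_off_diagonal:
  fixes e a :: "'a::ring_1"
  assumes "idem e"
  defines "n \<equiv> e * a * (1 - e)" and "m \<equiv> (1 - e) * a * e"
  shows "n * n = 0" "e * n + n * e = n" "m * m = 0" "e * m + m * e = m"
proof -
  have ee: "e * e = e" using assms(1) by (simp add: idem_def)
  have e_one_minus_e: "e * (1 - e) = 0" and one_minus_e_e: "(1 - e) * e = 0"
    by (simp_all add: algebra_simps ee)
  have "n * n = e * a * ((1 - e) * e) * a * (1 - e)"
    unfolding n_def by (simp only: mult.assoc)
  then show "n * n = 0" by (simp add: one_minus_e_e)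
  have "m * m = (1 - e) * a * (e * (1 - e)) * a * e"
    unfolding m_def by (simp only: mult.assoc)
  then show "m * m = 0" by (simp add: e_one_minus_e)
  have "e * n = n" "n * e = 0"
    unfolding n_def by (simp_all add: mult.assoc one_minus_e_e flip: mult.assoc[of e e] add: ee)
  then show "e * n + n * e = n" by simp
  have "e * m = 0" "m * e = m"
    unfolding m_def by (simp_all add: mult.assoc ee flip: mult.assoc[of e "1 - e"] add: e_one_minus_e)
  then show "e * m + m * e = m" by simp
qed

lemma commute_if_off_diagonal_zero:
  fixes e r :: "'a::ring_1"
  assumes "e * r * (1 - e) = 0" "(1 - e) * r * e = 0"
  shows "e * r = r * e"
proof -
  have "e * r = e * r * e" using assms(1) by (simp add: right_diff_distrib)
  also have "\<dots> = r * e" using assms(2) by (simp add: left_diff_distrib mult.assoc)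
  finally show ?thesis .
qed

lemma idem_one_minus: "idem e \<Longrightarrow> idem (1 - e)"
  by (simp add: idem_def algebra_simps)

lemma idem_mult_commuting:
  assumes "idem e" "idem g" "e * g = g * e"
  shows "idem (e * g)"
proof -
  have "e * g * (e * g) = e * (g * e) * g" by (simp add: mult.assoc)
  also have "\<dots> = e * (e * g) * g" by (simp only: assms(3))
  also have "\<dots> = (e * e) * (g * g)" by (simp only: mult.assoc)
  finally show ?thesis using assms(1,2) by (simp add: idem_def)
qed

lemma weak_lifts_congruent:
  assumes "is_ideal I" "x - f \<in> I \<or> x + f \<in> I" "x - g \<in> I \<or> x + g \<in> I"
  shows "f - g \<in> I \<or> f + g \<in> I"
  using assms(2,3)
proof (elim disjE)
  assume "x - f \<in> I" "x - g \<in> I"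
  from ideal_diff[OF assms(1) this(2,1)] show ?thesis by simp
next
  assume "x - f \<in> I" "x + g \<in> I"
  from ideal_diff[OF assms(1) this(2,1)] show ?thesis by (simp add: algebra_simps)
next
  assume "x + f \<in> I" "x - g \<in> I"
  from ideal_diff[OF assms(1) this] show ?thesis by (simp add: algebra_simps)
next
  assume "x + f \<in> I" "x + g \<in> I"
  from ideal_diff[OF assms(1) this] show ?thesis by (simp add: algebra_simps)
qed

lemma mult_one_minus_in_ideal:
  assumes "is_ideal I" "idem g" "e - g \<in> I \<or> e + g \<in> I"
  shows "e * (1 - g) \<in> I"
proof -
  have "e * (1 - g) = (e - g) * (1 - g)" "e * (1 - g) = (e + g) * (1 - g)"
    using assms(2) by (simp_all add: idem_def algebra_simps)
  then show ?thesis using assms(3) ideal_mult_right[OF assms(1)] by metis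
qed

lemma commuting_idem_eq_if_congruent:
  assumes I: "is_ideal I" and free: "idempotent_free I"
    and e: "idem e" and g: "idem g" and comm: "e * g = g * e"
    and congr: "e - g \<in> I \<or> e + g \<in> I"
  shows "e = g"
proof -
  have congr': "g - e \<in> I \<or> g + e \<in> I"
    using congr ideal_uminus[OF I, of "e - g"] by (auto simp: add.commute)
  have "idem (e * (1 - g))"
    using comm by (intro idem_mult_commuting e idem_one_minus g) (simp add: algebra_simps)
  then have "e * (1 - g) = 0"
    using free mult_one_minus_in_ideal[OF I g congr] by (simp add: idempotent_free_def)
  moreover have "idem (g * (1 - e))"
    using comm by (intro idem_mult_commuting g idem_one_minus e) (simp add: algebra_simps)
  then have "g * (1 - e) = 0"
    using free mult_one_minus_in_ideal[OF I e congr'] by (simp add: idempotent_free_def)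
  ultimately show ?thesis using comm by (simp add: algebra_simps)
qed

lemma idem_square_diff_in_ideal: "idem e \<Longrightarrow> is_ideal I \<Longrightarrow> e\<^sup>2 - e \<in> I"
  by (simp add: idem_def power2_eq_square ideal_zero)

lemma lift_uniquely_weaklyD:
  assumes "lift_uniquely_weakly I" "x\<^sup>2 - x \<in> I" "idem e" "idem f"
    and "x - e \<in> I \<or> x + e \<in> I" "x - f \<in> I \<or> x + f \<in> I"
  shows "e = f"
  using assms unfolding lift_uniquely_weakly_def Idem_iff by blast

lemma lift_uniquely_weakly_imp_idempotent_free:
  assumes I: "is_ideal I" and U: "lift_uniquely_weakly I"
  shows "idempotent_free I"
  unfolding idempotent_free_def
proof (intro ballI impI)
  fix e assume "e \<in> I" "idem e"
  moreover have "idem (0::'a)" by (simp add: idem_def)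
  ultimately show "e = 0"
    using lift_uniquely_weaklyD[OF U _ _ _ _ _, of 0 e 0] ideal_zero[OF I] by simp
qed

lemma lift_uniquely_weakly_square_zero_perturbation:
  fixes I :: "'a::ring_1 set" and e n :: 'a
  assumes I: "is_ideal I" and N: "Nil_set \<subseteq> I" and U: "lift_uniquely_weakly I"
    and e: "idem e" and "n * n = 0" "e * n + n * e = n"
  shows "n = 0"
proof -
  have "idem (e + n)" using idem_add_square_zero[OF e] assms by blast
  moreover have "e - (e + n) \<in> I"
    using ideal_uminus[OF I] N square_zero_in_Nil_set[OF \<open>n * n = 0\<close>] by auto
  moreover have "e - e \<in> I" using ideal_zero[OF I] by simp
  ultimately have "e = e + n"
    using lift_uniquely_weaklyD[OF U idem_square_diff_in_ideal[OF e I] e] by blast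
  then show ?thesis by simp
qed

lemma lift_uniquely_weakly_imp_abelian:
  fixes I :: "'a::ring_1 set"
  assumes "is_ideal I" "Nil_set \<subseteq> I" "lift_uniquely_weakly I"
  shows "abelian_ring TYPE('a)"
  unfolding abelian_ring_def central_def
proof (intro allI impI)
  fix e r :: 'a assume e: "idem e"
  note perturbation = lift_uniquely_weakly_square_zero_perturbation[OF assms e]
  have "e * r * (1 - e) = 0" "(1 - e) * r * e = 0"
    using idem_off_diagonal[OF e, of r] by (blast intro: perturbation)+
  then show "e * r = r * e" by (rule commute_if_off_diagonal_zero)
qed

lemma lift_centrally_weakly_imp_uniquely_weakly:
  assumes I: "is_ideal I" and free: "idempotent_free I" and C: "lift_centrally_weakly I"
  shows "lift_uniquely_weakly I"
  unfolding lift_uniquely_weakly_def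
proof (intro allI impI)
  fix x assume "x\<^sup>2 - x \<in> I"
  then obtain g where g: "idem g" "central g" and gx: "x - g \<in> I \<or> x + g \<in> I"
    using C unfolding lift_centrally_weakly_def Idem_def by blast
  have "f = g" if "idem f" "x - f \<in> I \<or> x + f \<in> I" for f
  proof (rule commuting_idem_eq_if_congruent[OF I free \<open>idem f\<close> \<open>idem g\<close>])
    show "f * g = g * f" using \<open>central g\<close> by (simp add: central_def)
    show "f - g \<in> I \<or> f + g \<in> I" by (rule weak_lifts_congruent[OF I that(2) gx])
  qed
  then show "\<exists>!e. e \<in> Idem \<and> (x - e \<in> I \<or> x + e \<in> I)"
    using g gx unfolding Idem_iff by blast
qed

theorem mainTheorem6:
  fixes I :: "'a::ring_1 set"
  assumes "is_ideal I"
    and "Nil_set \<subseteq> I"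
  shows "(lift_uniquely_weakly I
            \<longleftrightarrow> lift_weakly I \<and> abelian_ring TYPE('a) \<and> idempotent_free I)
       \<and> (lift_uniquely_weakly I
            \<longleftrightarrow> lift_centrally_weakly I \<and> idempotent_free I)"
proof -
  have "lift_uniquely_weakly I \<Longrightarrow> lift_weakly I \<and> abelian_ring TYPE('a) \<and> idempotent_free I"
    using lift_uniquely_weakly_imp_abelian[OF assms] lift_uniquely_weakly_imp_idempotent_free[OF assms(1)]
    unfolding lift_uniquely_weakly_def lift_weakly_def by blast
  moreover have "lift_weakly I \<and> abelian_ring TYPE('a) \<Longrightarrow> lift_centrally_weakly I"
    unfolding lift_weakly_def lift_centrally_weakly_def abelian_ring_def Idem_def by blast
  moreover have "lift_centrally_weakly I \<and> idempotent_free I \<Longrightarrow> lift_uniquely_weakly I"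
    using lift_centrally_weakly_imp_uniquely_weakly[OF assms(1)] by blast
  ultimately show ?thesis by blast
qed

end
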